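(* Let $A,B\in\mathfrak{J}_n$ be nonempty. If $A,B$ satisfy the zero-measure condition, then $xA\,\widetilde\oplus\,(1-x)B$ is Jordan measurable for every $x\in\mathbb{R}$. Otherwise it is Jordan measurable for every $x\in\mathbb{R}$ with $x\ne\frac12$.
   Context: $\mu$ is $n$-dimensional Lebesgue measure; a set $E$ is Jordan measurable iff it is bounded and $\mu(\partial E)=0$. $\operatorname{ci}(A)$ is the closure of the interior of $A$. $\mathfrak{J}_n$ is the family of bounded sets $A\subset\mathbb{R}^n$ with $A=\operatorname{ci}(A)$ and $\mu(\partial A)=0$. For nonempty bounded $A$, $d_S(p,A)=d(p,\partial A)$ if $p\in A$ and $d_S(p,A)=-d(p,\partial A)$ if $p\notin A$, with $d(q,E)=\min_{e\in E}\|q-e\|$. For nonempty $A,B\in\mathfrak{J}_n$, $x\in\mathbb{R}$: $f_{A,B,x}(p)=x\,d_S(p,A)+(1-x)\,d_S(p,B)$, the distance average is $xA\,\widetilde\oplus\,(1-x)B=\{p: f_{A,B,x}(p)\ge0\}$, and $\Omega_{A,B,x}=\{p: f_{A,B,x}(p)=0\}$. The sets $A,B$ satisfy the zero-measure condition if $\mu(\Omega_{A,B,1/2})=0$. *)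

theory Defs
  imports "HOL-Analysis.Analysis"
begin

text \<open>Ambient space R^n is modelled by a Euclidean space type 'a; mu is Lebesgue measure.\<close>

definition jordan_measurable :: "'a::euclidean_space set \<Rightarrow> bool" where
  "jordan_measurable E \<longleftrightarrow> bounded E \<and> emeasure lebesgue (frontier E) = 0"

definition ci :: "'a::euclidean_space set \<Rightarrow> 'a set" where
  "ci A = closure (interior A)"

definition JJ :: "'a::euclidean_space set set" where
  "JJ = {A. bounded A \<and> A = ci A \<and> emeasure lebesgue (frontier A) = 0}"

definition d_S :: "'a::euclidean_space \<Rightarrow> 'a set \<Rightarrow> real" where
  "d_S p A = (if p \<in> A then infdist p (frontier A) else - infdist p (frontier A))"

definition f_ABx :: "'a::euclidean_space set \<Rightarrow> 'a set \<Rightarrow> real \<Rightarrow> 'a \<Rightarrow> real" where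
  "f_ABx A B x p = x * d_S p A + (1 - x) * d_S p B"

definition dist_avg :: "'a::euclidean_space set \<Rightarrow> 'a set \<Rightarrow> real \<Rightarrow> 'a set" where
  "dist_avg A B x = {p. f_ABx A B x p \<ge> 0}"

definition Omega :: "'a::euclidean_space set \<Rightarrow> 'a set \<Rightarrow> real \<Rightarrow> 'a set" where
  "Omega A B x = {p. f_ABx A B x p = 0}"

definition zero_measure_condition :: "'a::euclidean_space set \<Rightarrow> 'a set \<Rightarrow> bool" where
  "zero_measure_condition A B \<longleftrightarrow> emeasure lebesgue (Omega A B (1/2)) = 0"

end

theory Submission
  imports Defs
begin

(*
  The function f = f_ABx A B x is continuous (signed distances are 1-Lipschitz),
  so the frontier of the distance average {f \<ge> 0} lies in Omega = {f = 0}; moreover f tends to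
  -\<infinity> at infinity, so the distance average is bounded.  Jordan measurability therefore
  reduces to negligibility of Omega.  For x = 1/2 this is the zero-measure condition.

  For x \<noteq> 1/2, on Omega we have |x| d(p, frontier A) = |1 - x| d(p, frontier B) with
  unequal weights; by symmetry assume |x| < |1 - x|.  Off the (negligible) frontier of B,
  Omega lies in a level set a d(p,F) = b d(p,G) with 0 \<le> a < b.  At such a point the function
  a d(.,F) - b d(.,G) grows linearly along a cone of directions pointing to a nearest point
  of G.  A general criterion shows that zero sets with such uniform cone growth are
  negligible: they are countable unions of pieces each met at most once by every ray from a
  suitable far-away apex, and such starlike closed sets are negligible.
*)

text \<open>Any segment from a point of A to a point outside A crosses the frontier, so the
  distances of the two endpoints to the frontier add up to at most their distance.\<close>

lemma infdist_frontier_across: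
  fixes A :: "'a::euclidean_space set"
  assumes "y \<in> A" "z \<notin> A"
  shows "infdist y (frontier A) + infdist z (frontier A) \<le> dist y z"
proof -
  have "closed_segment y z \<inter> frontier A \<noteq> {}"
    by (rule connected_Int_frontier) (use assms in auto)
  then obtain w where w: "w \<in> closed_segment y z" "w \<in> frontier A" by blast
  have "dist y z = dist y w + dist w z"
    using w(1) between[of y z w] by (simp add: between_mem_segment)
  moreover have "infdist y (frontier A) \<le> dist y w" "infdist z (frontier A) \<le> dist w z"
    using w(2) infdist_le by (auto simp: dist_commute)
  ultimately show ?thesis by simp
qed

text \<open>The signed distance is 1-Lipschitz (the mixed-sign case is the previous lemma).\<close>

lemma d_S_lipschitz:
  fixes A :: "'a::euclidean_space set"
  shows "\<bar>d_S y A - d_S z A\<bar> \<le> dist y z"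
  using infdist_triangle_abs[of y "frontier A" z]
    infdist_frontier_across[of y A z] infdist_frontier_across[of z A y]
    infdist_nonneg[of y "frontier A"] infdist_nonneg[of z "frontier A"]
  by (auto simp: d_S_def dist_commute)

lemma continuous_on_f_ABx: "continuous_on UNIV (f_ABx A B x)"
proof -
  have "continuous_on UNIV (\<lambda>p. d_S p S)" for S :: "'a set"
    by (rule lipschitz_on_continuous_on[where L = 1])
       (simp add: lipschitz_on_def d_S_lipschitz dist_real_def)
  then show ?thesis unfolding f_ABx_def[abs_def] by (intro continuous_intros)
qed

lemma frontier_superlevel_subset:
  fixes f :: "'a::topological_space \<Rightarrow> real"
  assumes f: "continuous_on UNIV f"
  shows "frontier {p. 0 \<le> f p} \<subseteq> {p. f p = 0}"
proof
  fix p assume p: "p \<in> frontier {p. 0 \<le> f p}"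
  have "closed {p. 0 \<le> f p}" by (intro closed_Collect_le continuous_on_const f)
  then have "0 \<le> f p" using p by (auto simp: frontier_def)
  moreover have "open {p. 0 < f p}" by (intro open_Collect_less continuous_on_const f)
  then have "{p. 0 < f p} \<subseteq> interior {p. 0 \<le> f p}" by (rule interior_maximal[rotated]) auto
  then have "\<not> 0 < f p" using p by (auto simp: frontier_def)
  ultimately show "p \<in> {p. f p = 0}" by simp
qed

lemma closed_negligible_iff_emeasure0:
  fixes S :: "'a::euclidean_space set"
  assumes "closed S"
  shows "negligible S \<longleftrightarrow> emeasure lebesgue S = 0"
  using assms by (simp add: negligible_iff_emeasure0 borel_closed)

lemma d_S_far_away:
  fixes A :: "'a::euclidean_space set"
  assumes A: "A \<noteq> {}" "A \<subseteq> cball 0 R" and p: "R < norm p"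
  shows "\<bar>d_S p A + norm p\<bar> \<le> R"
proof -
  have "bounded A" using A(2) bounded_cball bounded_subset by blast
  then have front: "frontier A \<noteq> {}" using A(1) frontier_not_empty not_bounded_UNIV by metis
  then obtain s where s: "s \<in> frontier A" by blast
  have front_R: "frontier A \<subseteq> cball 0 R"
    using A(2) closure_minimal[of A "cball 0 R"] by (auto simp: frontier_def)
  have "infdist p (frontier A) \<le> norm p + R"
    using infdist_le[OF s, of p] norm_triangle_ineq4[of p s] front_R s by (auto simp: dist_norm)
  moreover have "norm p - R \<le> infdist p (frontier A)"
    unfolding infdist_notempty[OF front]
  proof (rule cINF_greatest[OF front])
    fix y assume "y \<in> frontier A"
    then show "norm p - R \<le> dist p y"
      using front_R norm_triangle_ineq2[of p y] by (auto simp: dist_norm)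
  qed
  moreover have "p \<notin> A" using A(2) p by auto
  ultimately show ?thesis by (simp add: d_S_def)
qed

text \<open>Consequently f_ABx is negative far away, so the distance average of bounded sets is bounded.\<close>

lemma bounded_dist_avg:
  fixes A B :: "'a::euclidean_space set"
  assumes "bounded A" "bounded B" "A \<noteq> {}" "B \<noteq> {}"
  shows "bounded (dist_avg A B x)"
proof -
  have "bounded (A \<union> B)" using assms(1,2) by simp
  then obtain R where R: "0 < R" "\<forall>y \<in> A \<union> B. norm y \<le> R" unfolding bounded_pos by blast
  then have R_ball: "A \<subseteq> cball 0 R" "B \<subseteq> cball 0 R" by auto
  define M where "M = (\<bar>x\<bar> + \<bar>1 - x\<bar>) * R"
  have "dist_avg A B x \<subseteq> cball 0 (max R M)"
  proof
    fix p assume p: "p \<in> dist_avg A B x"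
    show "p \<in> cball 0 (max R M)"
    proof (rule ccontr)
      assume "p \<notin> cball 0 (max R M)"
      then have far: "R < norm p" "M < norm p" by auto
      define eA where "eA = d_S p A + norm p"
      define eB where "eB = d_S p B + norm p"
      have e: "\<bar>eA\<bar> \<le> R" "\<bar>eB\<bar> \<le> R"
        unfolding eA_def eB_def using d_S_far_away far(1) R_ball assms(3,4) by blast+
      have "x * eA \<le> \<bar>x\<bar> * R" "(1 - x) * eB \<le> \<bar>1 - x\<bar> * R"
        by (rule order_trans[OF abs_ge_self], simp add: abs_mult mult_left_mono e)+
      moreover have "f_ABx A B x p = x * eA + (1 - x) * eB - norm p"
        by (simp add: f_ABx_def eA_def eB_def algebra_simps)
      ultimately have "f_ABx A B x p < 0" using far(2) by (simp add: M_def algebra_simps)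
      then show False using p by (simp add: dist_avg_def)
    qed
  qed
  then show ?thesis using bounded_cball bounded_subset by blast
qed

lemma infdist_decreases_in_cone:
  fixes p q z :: "'a::real_inner"
  assumes q: "q \<in> G" and \<beta>: "0 \<le> \<beta>" "\<beta> \<le> \<psi>" "\<psi> \<le> 1"
    and short: "norm z \<le> (\<psi> - \<beta>) * norm (q - p)"
    and cone: "\<psi> * norm z * norm (q - p) \<le> z \<bullet> (q - p)"
  shows "infdist (p + z) G \<le> norm (q - p) - \<beta> * norm z"
proof -
  define d where "d = q - p"
  define V where "V = norm d"
  define n where "n = norm z"
  have n_le_V: "n \<le> V"
    using short \<beta> mult_left_le_one_le[of V "\<psi> - \<beta>"] by (simp add: V_def n_def d_def mult.commute)
  have sq_dist: "norm (z - d)^2 = n^2 - 2 * (z \<bullet> d) + V^2"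
    by (simp add: n_def V_def power2_norm_eq_inner inner_diff algebra_simps inner_commute)
  have "n * n \<le> (\<psi> - \<beta>) * V * n"
    using short by (intro mult_right_mono) (auto simp: n_def V_def d_def)
  moreover have "\<beta> * (n * V) \<le> \<psi> * (n * V)"
    using \<beta> by (intro mult_right_mono) (auto simp: n_def V_def)
  moreover have "0 \<le> \<beta> * \<beta> * (n * n)" by simp
  ultimately have "norm (z - d)^2 \<le> (V - \<beta> * n)^2"
    unfolding sq_dist using cone by (simp add: power2_eq_square algebra_simps n_def V_def d_def)
  moreover have "0 \<le> V - \<beta> * n"
    using n_le_V \<beta> mult_left_le_one_le[of n \<beta>] by (simp add: n_def)
  ultimately have "norm (z - d) \<le> V - \<beta> * n" by (rule power2_le_imp_le)
  moreover have "infdist (p + z) G \<le> norm (z - d)"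
    using infdist_le[OF q, of "p + z"] by (simp add: dist_norm d_def algebra_simps)
  ultimately show ?thesis by (simp add: V_def n_def d_def)
qed

lemma far_apex_cone:
  fixes e c :: "'a::real_inner"
  assumes \<psi>: "0 \<le> \<psi>" "\<psi> < norm e" and \<rho>: "0 < \<rho>"
  obtains a where "a \<notin> cball c \<rho>" "\<And>x. a + x \<in> cball c \<rho> \<Longrightarrow> \<psi> * norm x \<le> x \<bullet> e"
proof
  define n where "n = norm e"
  have n: "0 < n" "\<psi> < n" using \<psi> by (auto simp: n_def)
  define T where "T = \<rho> * (n + \<psi>) / (n - \<psi>) + \<rho>"
  have T_far: "\<rho> * (n + \<psi>) \<le> (T - \<rho>) * (n - \<psi>)" using n by (simp add: T_def)
  have "0 < \<rho> * (n + \<psi>) / (n - \<psi>)" using n \<psi> \<rho> by simp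
  then have T_gt: "\<rho> < T" by (simp add: T_def)
  define a where "a = c - (T / n) *\<^sub>R e"
  show "a \<notin> cball c \<rho>" using n T_gt by (simp add: a_def dist_norm n_def)
  fix x assume "a + x \<in> cball c \<rho>"
  define w where "w = x - (T / n) *\<^sub>R e"
  have w: "norm w \<le> \<rho>"
    using \<open>a + x \<in> cball c \<rho>\<close> by (simp add: w_def a_def dist_norm norm_minus_commute algebra_simps)
  have ee: "e \<bullet> e = n * n" by (simp add: n_def power2_eq_square[symmetric] power2_norm_eq_inner)
  have "norm w * n \<le> \<rho> * n" using w n by (simp add: w_def)
  then have "\<bar>w \<bullet> e\<bar> \<le> \<rho> * n"
    using Cauchy_Schwarz_ineq2[of w e] by (simp add: n_def)
  then have inner_x: "T * n - \<rho> * n \<le> x \<bullet> e"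
    using n ee by (simp add: w_def inner_diff_left)
  have "norm x \<le> \<rho> + T"
    using w norm_triangle_ineq[of w "(T / n) *\<^sub>R e"] n T_gt \<rho> by (simp add: w_def n_def)
  then have "\<psi> * norm x \<le> \<psi> * (\<rho> + T)" using \<psi> by (intro mult_left_mono)
  also have "\<dots> \<le> T * n - \<rho> * n"
    using T_far mult_strict_left_mono[OF n(2) \<rho>] by (simp add: algebra_simps)
  finally show "\<psi> * norm x \<le> x \<bullet> e" using inner_x by linarith
qed

text \<open>These pieces are the building blocks of the
  countable cover of a cone-growth zero set.\<close>

definition growth_piece ::
    "('a::real_inner \<Rightarrow> real) \<Rightarrow> real \<Rightarrow> real \<Rightarrow> 'a \<Rightarrow> real \<Rightarrow> 'a \<Rightarrow> 'a set" where
  "growth_piece g \<psi> \<kappa> e \<rho> c =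
     {p \<in> cball c \<rho>. g p = 0 \<and>
        (\<forall>z. norm z \<le> 2 * \<rho> \<and> \<psi> * norm z \<le> z \<bullet> e \<longrightarrow> \<kappa> * norm z \<le> g (p + z))}"

lemma closed_growth_piece:
  fixes g :: "'a::real_inner \<Rightarrow> real"
  assumes g: "continuous_on UNIV g"
  shows "closed (growth_piece g \<psi> \<kappa> e \<rho> c)"
proof -
  have "growth_piece g \<psi> \<kappa> e \<rho> c = cball c \<rho> \<inter> {p. g p = 0} \<inter>
      (\<Inter>z\<in>{z. norm z \<le> 2 * \<rho> \<and> \<psi> * norm z \<le> z \<bullet> e}. {p. \<kappa> * norm z \<le> g (p + z)})"
    by (auto simp: growth_piece_def)
  moreover have "continuous_on UNIV (\<lambda>p. g (p + z))" for z
    by (rule continuous_on_compose2[OF g]) (auto intro!: continuous_intros)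
  ultimately show ?thesis
    using g by (auto intro!: closed_Int closed_INT closed_Collect_eq closed_Collect_le continuous_intros)
qed

text \<open>Each piece is negligible: viewed from a far apex (far_apex_cone) every ray meets it at most
  once, since the growth at an inner point would contradict g = 0 at an outer point.\<close>

lemma negligible_growth_piece:
  fixes g :: "'a::euclidean_space \<Rightarrow> real"
  assumes g: "continuous_on UNIV g" and \<psi>: "0 \<le> \<psi>" "\<psi> < norm e" and \<kappa>: "0 < \<kappa>" and \<rho>: "0 < \<rho>"
  shows "negligible (growth_piece g \<psi> \<kappa> e \<rho> c)" (is "negligible ?P")
proof -
  obtain a where a: "a \<notin> cball c \<rho>" "\<And>x. a + x \<in> cball c \<rho> \<Longrightarrow> \<psi> * norm x \<le> x \<bullet> e"
    using far_apex_cone[OF \<psi> \<rho>] by blast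
  show ?thesis
  proof (rule starlike_negligible_strong[OF closed_growth_piece[OF g], of a])
    fix t :: real and x assume t: "0 \<le> t" "t < 1" and outer: "a + x \<in> ?P"
    show "a + t *\<^sub>R x \<notin> ?P"
    proof
      assume inner: "a + t *\<^sub>R x \<in> ?P"
      define z where "z = (1 - t) *\<^sub>R x"
      have "x \<noteq> 0" using outer a(1) by (auto simp: growth_piece_def)
      then have z_pos: "0 < norm z" using t by (simp add: z_def)
      have "dist (a + x) (a + t *\<^sub>R x) \<le> 2 * \<rho>"
        using inner outer dist_triangle[of "a + x" "a + t *\<^sub>R x" c]
        by (auto simp: growth_piece_def dist_commute)
      then have "norm z \<le> 2 * \<rho>" by (simp add: z_def dist_norm algebra_simps)
      moreover have "\<psi> * norm z \<le> z \<bullet> e"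
        using a(2)[of x] outer t mult_left_mono[of "\<psi> * norm x" "x \<bullet> e" "1 - t"]
        by (auto simp: growth_piece_def z_def)
      ultimately have "\<kappa> * norm z \<le> g (a + t *\<^sub>R x + z)"
        using inner by (auto simp: growth_piece_def)
      moreover have "a + t *\<^sub>R x + z = a + x" by (simp add: z_def algebra_simps)
      moreover have "0 < \<kappa> * norm z" using z_pos \<kappa> by simp
      ultimately show False using outer by (auto simp: growth_piece_def)
    qed
  qed
qed

text \<open>It is covered by countably
  many growth pieces with centres and axes from a countable dense set.\<close>

lemma negligible_if_cone_growth:
  fixes g :: "'a::euclidean_space \<Rightarrow> real"
  assumes g: "continuous_on UNIV g" and \<psi>: "0 \<le> \<psi>" "\<psi> < 1" and \<kappa>: "0 < \<kappa>"
    and growth: "\<And>p. p \<in> S \<Longrightarrow> g p = 0 \<and> (\<exists>u r. norm u = 1 \<and> 0 < r \<and>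
        (\<forall>z. norm z \<le> r \<and> \<psi> * norm z \<le> z \<bullet> u \<longrightarrow> \<kappa> * norm z \<le> g (p + z)))"
  shows "negligible S"
proof -
  define \<eta> where "\<eta> = (1 - \<psi>) / 4"
  have \<eta>: "0 < \<eta>" "\<psi> + \<eta> < 1 - \<eta>" using \<psi> by (simp_all add: \<eta>_def field_simps)
  define \<rho> where "\<rho> m = inverse (real (Suc m)) / 2" for m
  obtain D :: "'a set" where D: "countable D" "\<And>X. open X \<Longrightarrow> X \<noteq> {} \<Longrightarrow> \<exists>d\<in>D. d \<in> X"
    by (rule countable_dense_setE) blast
  define I where "I = {e \<in> D. \<psi> + \<eta> < norm e} \<times> (UNIV :: nat set) \<times> D"
  define piece where "piece = (\<lambda>(e, m, c). growth_piece g (\<psi> + \<eta>) \<kappa> e (\<rho> m) c)"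
  have "S \<subseteq> \<Union> (piece ` I)"
  proof
    fix p assume "p \<in> S"
    then obtain u r where p: "g p = 0" and u: "norm u = 1" and r: "0 < r"
      and cone: "\<And>z. norm z \<le> r \<Longrightarrow> \<psi> * norm z \<le> z \<bullet> u \<Longrightarrow> \<kappa> * norm z \<le> g (p + z)"
      using growth by blast
    obtain m where m: "inverse (real (Suc m)) < r" using reals_Archimedean[OF r] by blast
    obtain e where e: "e \<in> D" "dist u e < \<eta>" using D(2)[of "ball u \<eta>"] \<eta>(1) by auto
    obtain c where c: "c \<in> D" "dist p c < \<rho> m"
      using D(2)[of "ball p (\<rho> m)"] by (auto simp: \<rho>_def)
    have "norm u \<le> norm e + norm (u - e)" by (metis norm_triangle_sub)
    then have e_long: "\<psi> + \<eta> < norm e" using e(2) u \<eta>(2) by (simp add: dist_norm)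
    have "p \<in> piece (e, m, c)" unfolding piece_def prod.case growth_piece_def
    proof (intro CollectI conjI allI impI)
      show "p \<in> cball c (\<rho> m)" using c by (simp add: dist_commute)
      show "g p = 0" by fact
      fix z assume z: "norm z \<le> 2 * \<rho> m \<and> (\<psi> + \<eta>) * norm z \<le> z \<bullet> e"
      have "\<bar>z \<bullet> (e - u)\<bar> \<le> norm z * \<eta>"
        using Cauchy_Schwarz_ineq2[of z "e - u"] mult_left_mono[of "norm (e - u)" \<eta> "norm z"] e(2)
        by (simp add: dist_norm norm_minus_commute)
      then have "\<psi> * norm z \<le> z \<bullet> u"
        using z by (simp add: inner_diff_right algebra_simps abs_le_iff)
      moreover have "2 * \<rho> m = inverse (real (Suc m))" by (simp add: \<rho>_def)
      then have "norm z \<le> r" using z m by linarith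
      ultimately show "\<kappa> * norm z \<le> g (p + z)" using cone by blast
    qed
    then show "p \<in> \<Union> (piece ` I)" using e c e_long by (auto simp: I_def)
  qed
  moreover have "negligible (\<Union> (piece ` I))"
  proof (rule negligible_countable_Union)
    show "countable (piece ` I)" using D(1) by (simp add: I_def)
    show "negligible T" if "T \<in> piece ` I" for T
      using that negligible_growth_piece[OF g _ _ \<kappa>] \<psi> \<eta> by (auto simp: I_def piece_def \<rho>_def)
  qed
  ultimately show ?thesis by (rule negligible_subset[rotated])
qed

text \<open>On the level set a * d(p,F) = b * d(p,G) with d(p,G) > 0 and a \<le> b, the function
  a * d(.,F) - b * d(.,G) grows linearly towards a nearest point of G.\<close>

lemma weighted_level_cone_growth:
  fixes F G :: "'a::euclidean_space set"
  assumes G: "closed G" "G \<noteq> {}" and ab: "0 \<le> a" "a \<le> b" "b * \<beta> = (a + b) / 2"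
    and \<beta>: "0 \<le> \<beta>" "\<beta> < \<psi>" "\<psi> \<le> 1"
    and level: "a * infdist p F = b * infdist p G" and pos: "0 < infdist p G"
  shows "\<exists>u r. norm u = 1 \<and> 0 < r \<and> (\<forall>z. norm z \<le> r \<and> \<psi> * norm z \<le> z \<bullet> u \<longrightarrow>
           (b - a) / 2 * norm z \<le> a * infdist (p + z) F - b * infdist (p + z) G)"
proof -
  obtain q where q: "q \<in> G" "infdist p G = dist p q" using infdist_attains_inf[OF G] by blast
  define V where "V = norm (q - p)"
  have V: "infdist p G = V" "0 < V" using q pos by (simp_all add: V_def dist_norm norm_minus_commute)
  define u where "u = (1 / V) *\<^sub>R (q - p)"
  have u: "norm u = 1" "q - p = V *\<^sub>R u" using V by (simp_all add: u_def V_def)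
  have "(b - a) / 2 * norm z \<le> a * infdist (p + z) F - b * infdist (p + z) G"
    if z: "norm z \<le> (\<psi> - \<beta>) * V" "\<psi> * norm z \<le> z \<bullet> u" for z
  proof -
    have "\<psi> * norm z * V \<le> (z \<bullet> u) * V" using z(2) V(2) by (intro mult_right_mono) auto
    also have "\<dots> = z \<bullet> (q - p)" by (simp add: u(2))
    finally have "infdist (p + z) G \<le> V - \<beta> * norm z"
      using infdist_decreases_in_cone[OF q(1) \<beta>(1) less_imp_le[OF \<beta>(2)] \<beta>(3)] z(1)
      unfolding V_def by blast
    then have "b * infdist (p + z) G \<le> b * (V - \<beta> * norm z)"
      using ab \<beta> by (intro mult_left_mono) auto
    moreover have "a * (infdist p F - norm z) \<le> a * infdist (p + z) F"
      using infdist_triangle[of p F "p + z"] ab(1) by (intro mult_left_mono) (auto simp: dist_norm)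
    moreover have "b * (V - \<beta> * norm z) = b * V - (a + b) / 2 * norm z"
      using ab(3) by (simp add: right_diff_distrib mult.assoc[symmetric])
    moreover have "a * (infdist p F - norm z) = b * V - a * norm z"
      using level V(1) by (simp add: right_diff_distrib)
    ultimately show ?thesis by (simp add: field_simps)
  qed
  moreover have "0 < (\<psi> - \<beta>) * V" using \<beta> V by simp
  ultimately show ?thesis using u(1) by blast
qed

lemma negligible_weighted_level_set:
  fixes F G :: "'a::euclidean_space set"
  assumes G: "closed G" "G \<noteq> {}" and ab: "0 \<le> a" "a < b"
  shows "negligible {p. a * infdist p F = b * infdist p G \<and> 0 < infdist p G}"
proof (rule negligible_if_cone_growth)
  define \<beta> where "\<beta> = (a + b) / (2 * b)"
  have \<beta>: "b * \<beta> = (a + b) / 2" "0 \<le> \<beta>" "\<beta> < 1" using ab by (simp_all add: \<beta>_def field_simps)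
  define \<psi> where "\<psi> = (1 + \<beta>) / 2"
  show "continuous_on UNIV (\<lambda>p. a * infdist p F - b * infdist p G)"
    by (intro continuous_intros)
  show "0 \<le> \<psi>" "\<psi> < 1" using \<beta> by (simp_all add: \<psi>_def)
  show "0 < (b - a) / 2" using ab by simp
  fix p assume "p \<in> {p. a * infdist p F = b * infdist p G \<and> 0 < infdist p G}"
  then show "a * infdist p F - b * infdist p G = 0 \<and> (\<exists>u r. norm u = 1 \<and> 0 < r \<and>
      (\<forall>z. norm z \<le> r \<and> \<psi> * norm z \<le> z \<bullet> u \<longrightarrow>
         (b - a) / 2 * norm z \<le> a * infdist (p + z) F - b * infdist (p + z) G))"
    using weighted_level_cone_growth[OF G ab(1) less_imp_le[OF ab(2)] \<beta>(1,2), of \<psi>] \<beta> by (simp add: \<psi>_def)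
qed

lemma Omega_swap: "Omega A B x = Omega B A (1 - x)"
  by (simp add: Omega_def f_ABx_def algebra_simps)

lemma Omega_weighted_level:
  assumes "p \<in> Omega A B x"
  shows "\<bar>x\<bar> * infdist p (frontier A) = \<bar>1 - x\<bar> * infdist p (frontier B)"
proof -
  have "x * d_S p A = - ((1 - x) * d_S p B)" using assms by (simp add: Omega_def f_ABx_def)
  then have "\<bar>x\<bar> * \<bar>d_S p A\<bar> = \<bar>1 - x\<bar> * \<bar>d_S p B\<bar>" by (metis abs_minus_cancel abs_mult)
  moreover have "\<bar>d_S p S\<bar> = infdist p (frontier S)" for S :: "'a set"
    by (simp add: d_S_def infdist_nonneg)
  ultimately show ?thesis by simp
qed

text \<open>If |x| < |1 - x|, Omega lies in frontier B together with a negligible weighted level set.\<close>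

lemma negligible_Omega_unbalanced:
  fixes A B :: "'a::euclidean_space set"
  assumes B: "frontier B \<noteq> {}" "negligible (frontier B)" and x: "\<bar>x\<bar> < \<bar>1 - x\<bar>"
  shows "negligible (Omega A B x)"
proof -
  let ?level = "{p. \<bar>x\<bar> * infdist p (frontier A) = \<bar>1 - x\<bar> * infdist p (frontier B)
                   \<and> 0 < infdist p (frontier B)}"
  have "Omega A B x \<subseteq> frontier B \<union> ?level"
    using Omega_weighted_level in_closed_iff_infdist_zero[OF frontier_closed B(1)]
      infdist_nonneg[of _ "frontier B"] by (fastforce simp: order_less_le)
  moreover have "negligible ?level"
    using negligible_weighted_level_set[OF frontier_closed B(1)] x by simp
  ultimately show ?thesis using B(2) negligible_Un negligible_subset by blast
qed

lemma negligible_Omega: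
  fixes A B :: "'a::euclidean_space set"
  assumes "frontier A \<noteq> {}" "negligible (frontier A)" "frontier B \<noteq> {}" "negligible (frontier B)"
    and "x \<noteq> 1/2"
  shows "negligible (Omega A B x)"
proof (cases "\<bar>x\<bar> < \<bar>1 - x\<bar>")
  case True
  then show ?thesis using negligible_Omega_unbalanced assms(3,4) by blast
next
  case False
  with \<open>x \<noteq> 1/2\<close> have "\<bar>1 - x\<bar> < \<bar>1 - (1 - x)\<bar>" by (auto simp: abs_if split: if_splits)
  then show ?thesis using negligible_Omega_unbalanced[of A "1 - x" B] assms(1,2) Omega_swap by metis
qed

lemma JJ_regular:
  fixes A :: "'a::euclidean_space set"
  assumes "A \<in> JJ" "A \<noteq> {}"
  shows "bounded A" "frontier A \<noteq> {}" "negligible (frontier A)"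
proof -
  show "bounded A" using assms(1) by (simp add: JJ_def)
  then show "frontier A \<noteq> {}" using assms(2) frontier_not_empty not_bounded_UNIV by metis
  have "emeasure lebesgue (frontier A) = 0" using assms(1) unfolding JJ_def by blast
  then show "negligible (frontier A)" using closed_negligible_iff_emeasure0[OF frontier_closed] by blast
qed

lemma zero_measure_condition_negligible:
  fixes A B :: "'a::euclidean_space set"
  assumes "zero_measure_condition A B"
  shows "negligible (Omega A B (1/2))"
proof -
  have "closed (Omega A B (1/2))"
    unfolding Omega_def by (intro closed_Collect_eq continuous_on_f_ABx continuous_on_const)
  then show ?thesis
    using assms closed_negligible_iff_emeasure0 unfolding zero_measure_condition_def by blast
qed

lemma jordan_measurable_dist_avg:
  fixes A B :: "'a::euclidean_space set"
  assumes "bounded A" "bounded B" "A \<noteq> {}" "B \<noteq> {}" and Omega: "negligible (Omega A B x)"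
  shows "jordan_measurable (dist_avg A B x)"
proof -
  have "frontier (dist_avg A B x) \<subseteq> Omega A B x"
    using frontier_superlevel_subset[OF continuous_on_f_ABx] by (simp add: dist_avg_def Omega_def)
  then have "negligible (frontier (dist_avg A B x))" using Omega negligible_subset by blast
  then have "emeasure lebesgue (frontier (dist_avg A B x)) = 0"
    using closed_negligible_iff_emeasure0[OF frontier_closed] by blast
  then show ?thesis
    using bounded_dist_avg[OF assms(1-4)] unfolding jordan_measurable_def by blast
qed

theorem mainTheorem6:
  fixes A B :: "'a::euclidean_space set"
  assumes "A \<in> JJ" "B \<in> JJ" "A \<noteq> {}" "B \<noteq> {}"
  shows "(zero_measure_condition A B \<longrightarrow> (\<forall>x::real. jordan_measurable (dist_avg A B x)))
       \<and> (\<not> zero_measure_condition A B \<longrightarrow> (\<forall>x::real. x \<noteq> 1/2 \<longrightarrow> jordan_measurable (dist_avg A B x)))"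
proof -
  note A = JJ_regular[OF assms(1,3)] and B = JJ_regular[OF assms(2,4)]
  have measurable: "jordan_measurable (dist_avg A B x)" if "negligible (Omega A B x)" for x
    using jordan_measurable_dist_avg[OF A(1) B(1) assms(3,4) that] .
  have off_half: "jordan_measurable (dist_avg A B x)" if "x \<noteq> 1/2" for x
    using measurable negligible_Omega[OF A(2,3) B(2,3) that] by blast
  have "jordan_measurable (dist_avg A B (1/2))" if "zero_measure_condition A B"
    using measurable zero_measure_condition_negligible[OF that] by blast
  then show ?thesis using off_half by metis
qed

end
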